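(* Consider a $(1+\varepsilon)$-adversarial sampling process (as in the context) on $k$ elements with $0<\varepsilon<1/2$ and initial weights normalized so that $\sum_{e\in E_0}w_0(e)=k$, against an arbitrary adversary. Then for every $\ell\in\{1,2,\ldots,\lfloor|S_0|/2\rfloor\}$, the probability that $\ell$ is bad is at most $e^{-\ell/40}$.
   Context: The $(1+\varepsilon)$-adversarial sampling process: initially there is a set $E_0$ of $k$ elements with nonnegative weights $w_0$. In round $i$, let $D_i$ be the distribution on $E_i$ with $\Pr_{D_i}(e)=w_i(e)/\sum_{e'\in E_i}w_i(e')$; an adversary chooses any distribution $D_i^\varepsilon$ on $E_i$ with $(1-\varepsilon)\Pr_{D_i}(e)\le\Pr_{D_i^\varepsilon}(e)\le(1+\varepsilon)\Pr_{D_i}(e)$ for all $e$; an element $e_{i+1}$ is sampled from $D_i^\varepsilon$ and $E_{i+1}=E_i\setminus\{e_{i+1}\}$; then the adversary chooses weights $0\le w_{i+1}(e)\le w_i(e)$ for $e\in E_{i+1}$. The adversary is a fixed strategy whose choices may depend on the history; probabilities are over the sampling. Notation: for $E\subseteq E_i$, $w_i(E)=\sum_{e\in E}w_i(e)$. For each $i$, partition $E_i=B_i\sqcup M_i\sqcup S_i$ where $e\in B_i$ iff $w_i(e)\ge 80$, $e\in M_i$ iff $2<w_i(e)<80$, and $e\in S_i$ iff $w_i(e)\le 2$. For $\ell\in\{1,\ldots,|S_0|\}$, $i_\ell$ is the smallest $i$ with $|S_i|=\ell$. An $\ell\in\{1,\ldots,\lfloor|S_0|/2\rfloor\}$ is called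 bad if both $w_{i_{2\ell}}(B_{i_{2\ell}})\le 8\ell$ and $w_{i_\ell}(B_{i_\ell})>4\ell$; otherwise it is good. *)

theory Defs
  imports Main "HOL-Library.Multiset" Complex_Main
begin

text \<open>A history is the list of elements sampled so
far. The (deterministic) adversary is given by two functions of the history:
  Dist h : the distribution D_i^eps chosen in round i = length h,
  Wt h   : the weights w_i (Wt [] = w_0; Wt (h @ [x]) is chosen after x is sampled).\<close>

definition valid_hist :: "'a set \<Rightarrow> 'a list \<Rightarrow> bool" where
  "valid_hist E0 h \<longleftrightarrow> distinct h \<and> set h \<subseteq> E0"

definition remaining :: "'a set \<Rightarrow> 'a list \<Rightarrow> 'a set" where
  "remaining E0 h = E0 - set h"

definition adversary ::
  "'a set \<Rightarrow> real \<Rightarrow> ('a \<Rightarrow> real) \<Rightarrow> ('a list \<Rightarrow> 'a \<Rightarrow> real) \<Rightarrow> ('a list \<Rightarrow> 'a \<Rightarrow> real) \<Rightarrow> bool"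
where
  "adversary E0 eps w0 Dist Wt \<longleftrightarrow>
     Wt [] = w0 \<and>
     (\<forall>h. valid_hist E0 h \<and> remaining E0 h \<noteq> {} \<longrightarrow>
        (\<forall>e\<in>remaining E0 h. 0 \<le> Dist h e) \<and>
        sum (Dist h) (remaining E0 h) = 1 \<and>
        (sum (Wt h) (remaining E0 h) > 0 \<longrightarrow>
          (\<forall>e\<in>remaining E0 h.
             (1 - eps) * (Wt h e / sum (Wt h) (remaining E0 h)) \<le> Dist h e \<and>
             Dist h e \<le> (1 + eps) * (Wt h e / sum (Wt h) (remaining E0 h))))) \<and>
     (\<forall>h x. valid_hist E0 h \<and> x \<in> remaining E0 h \<longrightarrow>
        (\<forall>e\<in>remaining E0 (h @ [x]). 0 \<le> Wt (h @ [x]) e \<and> Wt (h @ [x]) e \<le> Wt h e))"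

definition path_prob :: "('a list \<Rightarrow> 'a \<Rightarrow> real) \<Rightarrow> 'a list \<Rightarrow> real" where
  "path_prob Dist h = (\<Prod>i<length h. Dist (take i h) (h ! i))"

definition complete_runs :: "'a set \<Rightarrow> 'a list set" where
  "complete_runs E0 = {h. distinct h \<and> set h = E0}"

definition prob_event :: "'a set \<Rightarrow> ('a list \<Rightarrow> 'a \<Rightarrow> real) \<Rightarrow> ('a list \<Rightarrow> bool) \<Rightarrow> real" where
  "prob_event E0 Dist P = (\<Sum>h\<in>{h\<in>complete_runs E0. P h}. path_prob Dist h)"

text \<open>Along the run h: round i has E_i = E0 - set (take i h) and w_i = Wt (take i h).\<close>
definition S_set :: "'a set \<Rightarrow> ('a list \<Rightarrow> 'a \<Rightarrow> real) \<Rightarrow> 'a list \<Rightarrow> nat \<Rightarrow> 'a set" where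
  "S_set E0 Wt h i = {e \<in> E0 - set (take i h). Wt (take i h) e \<le> 2}"

definition B_set :: "'a set \<Rightarrow> ('a list \<Rightarrow> 'a \<Rightarrow> real) \<Rightarrow> 'a list \<Rightarrow> nat \<Rightarrow> 'a set" where
  "B_set E0 Wt h i = {e \<in> E0 - set (take i h). Wt (take i h) e \<ge> 80}"

definition first_idx :: "'a set \<Rightarrow> ('a list \<Rightarrow> 'a \<Rightarrow> real) \<Rightarrow> 'a list \<Rightarrow> nat \<Rightarrow> nat" where
  "first_idx E0 Wt h l = (LEAST i. card (S_set E0 Wt h i) = l)"

definition B_weight :: "'a set \<Rightarrow> ('a list \<Rightarrow> 'a \<Rightarrow> real) \<Rightarrow> 'a list \<Rightarrow> nat \<Rightarrow> real" where
  "B_weight E0 Wt h i = sum (Wt (take i h)) (B_set E0 Wt h i)"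

definition is_bad :: "'a set \<Rightarrow> ('a list \<Rightarrow> 'a \<Rightarrow> real) \<Rightarrow> 'a list \<Rightarrow> nat \<Rightarrow> bool" where
  "is_bad E0 Wt h l \<longleftrightarrow>
     B_weight E0 Wt h (first_idx E0 Wt h (2 * l)) \<le> 8 * real l \<and>
     B_weight E0 Wt h (first_idx E0 Wt h l) > 4 * real l"

end

theory Submission
  imports Defs "HOL-Combinatorics.Multiset_Permutations"
begin

text \<open>
  The potential of a history is \<open>e^(-l/40)\<close> before round \<open>i\<^sub>2\<^sub>l\<close> and the indicator
  of \<open>l\<close> being bad from round \<open>i\<^sub>l\<close> on. In between it is
  \<open>(5/6)^(min(|S|, 2l) - l) * e^((w(B) - 4l)/40)\<close> while \<open>l\<close> can still become bad
  (\<open>w(B) \<le> 8l\<close> at \<open>i\<^sub>2\<^sub>l\<close> and \<open>w(B) > 4l\<close> now), and \<open>0\<close> otherwise; on entering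
  this phase it is at most \<open>(5/6)^l e^(l/10) \<le> e^(-l/40)\<close>. Weights only decrease, so small
  elements stay small and \<open>|S|\<close> drops by at most one per round: the phases are entered
  exactly at \<open>i\<^sub>2\<^sub>l\<close> and \<open>i\<^sub>l\<close>. In a middle round, with \<open>W\<close> the total weight, a small
  element is drawn with probability at most \<open>3|S|/W\<close> and multiplies the potential by at
  most \<open>6/5\<close>, whereas a big element is drawn with probability at least \<open>w(B)/(2W)\<close> and
  multiplies it by \<open>e^(-2)\<close>; as \<open>2|S| \<le> 4l < w(B)\<close>, the potential is a supermartingale.
  Its value at the root therefore bounds the probability that \<open>l\<close> is bad.
\<close>

section \<open>Supermartingales on the tree of runs\<close>

definition continuation_prob :: "('a list \<Rightarrow> 'a \<Rightarrow> real) \<Rightarrow> 'a list \<Rightarrow> 'a list \<Rightarrow> real" where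
  "continuation_prob Dist p t = (\<Prod>i<length t. Dist (p @ take i t) (t ! i))"

lemma continuation_prob_Cons:
  "continuation_prob Dist p (x # t) = Dist p x * continuation_prob Dist (p @ [x]) t"
  unfolding continuation_prob_def by (simp only: length_Cons prod.lessThan_Suc_shift) simp

lemma path_prob_eq_continuation_prob: "path_prob Dist h = continuation_prob Dist [] h"
  by (simp add: path_prob_def continuation_prob_def)

lemma sum_permutations_of_set_Cons:
  assumes "finite R" and "R \<noteq> {}"
  shows "(\<Sum>t\<in>permutations_of_set R. F t) = (\<Sum>x\<in>R. \<Sum>t\<in>permutations_of_set (R - {x}). F (x # t))"
proof -
  have "(\<Sum>t\<in>permutations_of_set R. F t) = (\<Sum>x\<in>R. \<Sum>t\<in>(#) x ` permutations_of_set (R - {x}). F t)"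
    unfolding permutations_of_set_nonempty[OF assms(2)]
    by (rule sum.UNION_disjoint) (auto simp: assms(1))
  also have "\<dots> = (\<Sum>x\<in>R. \<Sum>t\<in>permutations_of_set (R - {x}). F (x # t))"
    by (rule sum.cong[OF refl], subst sum.reindex) (auto simp: inj_on_def)
  finally show ?thesis .
qed

lemma sum_continuations_le_supermartingale:
  fixes Dist :: "'a list \<Rightarrow> 'a \<Rightarrow> real" and Phi :: "'a list \<Rightarrow> real"
  assumes fin: "finite E0"
    and nonneg: "\<And>p e. valid_hist E0 p \<Longrightarrow> e \<in> remaining E0 p \<Longrightarrow> 0 \<le> Dist p e"
    and step: "\<And>p. valid_hist E0 p \<Longrightarrow> remaining E0 p \<noteq> {} \<Longrightarrow>
                 (\<Sum>x\<in>remaining E0 p. Dist p x * Phi (p @ [x])) \<le> Phi p"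
    and final: "\<And>p. valid_hist E0 p \<Longrightarrow> remaining E0 p = {} \<Longrightarrow> of_bool (P p) \<le> Phi p"
    and "valid_hist E0 p"
  shows "(\<Sum>t\<in>permutations_of_set (remaining E0 p).
           continuation_prob Dist p t * of_bool (P (p @ t))) \<le> Phi p"
  using \<open>valid_hist E0 p\<close>
proof (induction "card (remaining E0 p)" arbitrary: p rule: less_induct)
  case less
  define R where "R = remaining E0 p"
  have "finite R" using fin by (simp add: R_def remaining_def)
  have remaining_snoc: "remaining E0 (p @ [x]) = R - {x}" for x
    by (auto simp: R_def remaining_def)
  show ?case
  proof (cases "R = {}")
    case True
    then show ?thesis using final[OF less.prems] by (simp add: R_def continuation_prob_def)
  next
    case False
    have IH: "(\<Sum>t\<in>permutations_of_set (R - {x}). continuation_prob Dist (p @ [x]) t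
                 * of_bool (P ((p @ [x]) @ t))) \<le> Phi (p @ [x])" if "x \<in> R" for x
    proof (rule less.hyps[of "p @ [x]", unfolded remaining_snoc])
      show "card (R - {x}) < card (remaining E0 p)"
        unfolding R_def[symmetric] using \<open>finite R\<close> that by (rule card_Diff1_less)
      show "valid_hist E0 (p @ [x])"
        using less.prems that by (auto simp: valid_hist_def R_def remaining_def)
    qed
    have "(\<Sum>t\<in>permutations_of_set R. continuation_prob Dist p t * of_bool (P (p @ t)))
        = (\<Sum>x\<in>R. Dist p x * (\<Sum>t\<in>permutations_of_set (R - {x}).
              continuation_prob Dist (p @ [x]) t * of_bool (P ((p @ [x]) @ t))))"
      by (simp add: sum_permutations_of_set_Cons[OF \<open>finite R\<close> False] continuation_prob_Cons
          sum_distrib_left mult.assoc del: sum_mult_of_bool_eq)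
    also have "\<dots> \<le> (\<Sum>x\<in>R. Dist p x * Phi (p @ [x]))"
      by (intro sum_mono mult_left_mono IH) (use nonneg less.prems in \<open>auto simp: R_def\<close>)
    also have "\<dots> \<le> Phi p"
      using step less.prems False by (simp add: R_def)
    finally show ?thesis by (simp add: R_def)
  qed
qed

lemma prob_event_le_supermartingale:
  fixes Dist :: "'a list \<Rightarrow> 'a \<Rightarrow> real" and Phi :: "'a list \<Rightarrow> real"
  assumes "finite E0"
    and "\<And>p e. valid_hist E0 p \<Longrightarrow> e \<in> remaining E0 p \<Longrightarrow> 0 \<le> Dist p e"
    and "\<And>p. valid_hist E0 p \<Longrightarrow> remaining E0 p \<noteq> {} \<Longrightarrow>
           (\<Sum>x\<in>remaining E0 p. Dist p x * Phi (p @ [x])) \<le> Phi p"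
    and "\<And>p. valid_hist E0 p \<Longrightarrow> remaining E0 p = {} \<Longrightarrow> of_bool (P p) \<le> Phi p"
  shows "prob_event E0 Dist P \<le> Phi []"
proof -
  have "complete_runs E0 = permutations_of_set E0"
    by (auto simp: complete_runs_def permutations_of_set_def)
  then have "prob_event E0 Dist P
      = (\<Sum>t\<in>permutations_of_set (remaining E0 []). continuation_prob Dist [] t * of_bool (P ([] @ t)))"
    by (simp add: prob_event_def path_prob_eq_continuation_prob remaining_def Int_def conj_commute)
  also have "\<dots> \<le> Phi []"
    by (rule sum_continuations_le_supermartingale) (fact assms | simp add: valid_hist_def)+
  finally show ?thesis .
qed

lemma discrete_ivt_decreasing:
  fixes f :: "nat \<Rightarrow> nat"
  assumes step: "\<And>j. f j \<le> f (Suc j) + 1" and "m \<le> f 0" and "f n \<le> m"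
  shows "\<exists>j\<le>n. f j = m"
  using \<open>f n \<le> m\<close>
proof (induction n)
  case 0
  then show ?case using \<open>m \<le> f 0\<close> by auto
next
  case (Suc n)
  show ?case
  proof (cases "f n \<le> m")
    case True
    then show ?thesis using Suc.IH by (meson le_SucI)
  next
    case False
    then have "f (Suc n) = m" using step[of n] Suc.prems by linarith
    then show ?thesis by blast
  qed
qed

locale adversarial_sampling =
  fixes E0 :: "'a set" and eps :: real and w0 :: "'a \<Rightarrow> real"
    and Dist Wt :: "'a list \<Rightarrow> 'a \<Rightarrow> real"
  assumes finite_E0: "finite E0"
    and eps_less: "eps < 1/2"
    and w0_nonneg: "\<forall>e\<in>E0. 0 \<le> w0 e"
    and adversary: "adversary E0 eps w0 Dist Wt"
begin

abbreviation "valid h \<equiv> valid_hist E0 h"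
abbreviation "rem h \<equiv> remaining E0 h"
abbreviation "S h i \<equiv> S_set E0 Wt h i"
abbreviation "B h i \<equiv> B_set E0 Wt h i"
abbreviation "wB h i \<equiv> B_weight E0 Wt h i"
abbreviation "idx h m \<equiv> first_idx E0 Wt h m"

lemma Wt_Nil: "Wt [] = w0"
  using adversary unfolding adversary_def by blast

lemma Dist_nonneg: "valid h \<Longrightarrow> e \<in> rem h \<Longrightarrow> 0 \<le> Dist h e"
  using adversary unfolding adversary_def by blast

lemma sum_Dist_eq_1: "valid h \<Longrightarrow> rem h \<noteq> {} \<Longrightarrow> sum (Dist h) (rem h) = 1"
  using adversary unfolding adversary_def by blast

lemma Dist_bounds: "valid h \<Longrightarrow> e \<in> rem h \<Longrightarrow> 0 < sum (Wt h) (rem h) \<Longrightarrow>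
    (1 - eps) * (Wt h e / sum (Wt h) (rem h)) \<le> Dist h e \<and>
    Dist h e \<le> (1 + eps) * (Wt h e / sum (Wt h) (rem h))"
  using adversary unfolding adversary_def by blast

lemma Wt_snoc_bounds: "valid h \<Longrightarrow> x \<in> rem h \<Longrightarrow> e \<in> rem (h @ [x]) \<Longrightarrow>
    0 \<le> Wt (h @ [x]) e \<and> Wt (h @ [x]) e \<le> Wt h e"
  using adversary unfolding adversary_def by blast

lemma valid_snoc_iff: "valid (h @ [x]) \<longleftrightarrow> valid h \<and> x \<in> rem h"
  by (auto simp: valid_hist_def remaining_def)

lemma valid_take: "valid h \<Longrightarrow> valid (take j h)"
  by (auto simp: valid_hist_def dest: in_set_takeD)

lemma nth_in_remaining_take:
  assumes "valid h" and "j < length h"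
  shows "h ! j \<in> rem (take j h)"
proof -
  have "h ! j \<in> E0" using assms nth_mem by (fastforce simp: valid_hist_def)
  moreover have "h ! j \<notin> set (take j h)"
    using assms by (auto simp: valid_hist_def in_set_conv_nth nth_eq_iff_index_eq)
  ultimately show ?thesis by (simp add: remaining_def)
qed

lemma sum_Dist_mult_le:
  assumes "valid h" and "rem h \<noteq> {}" and "\<And>x. x \<in> rem h \<Longrightarrow> f x \<le> c"
  shows "(\<Sum>x\<in>rem h. Dist h x * f x) \<le> c"
proof -
  have "(\<Sum>x\<in>rem h. Dist h x * f x) \<le> (\<Sum>x\<in>rem h. Dist h x * c)"
    by (intro sum_mono mult_left_mono assms(3) Dist_nonneg[OF assms(1)])
  also have "\<dots> = c" using sum_Dist_eq_1[OF assms(1,2)] by (simp add: sum_distrib_right[symmetric])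
  finally show ?thesis .
qed

lemma Wt_nonneg: "valid h \<Longrightarrow> e \<in> rem h \<Longrightarrow> 0 \<le> Wt h e"
proof (induction h arbitrary: e rule: rev_induct)
  case Nil
  then show ?case using w0_nonneg Wt_Nil by (simp add: remaining_def)
next
  case (snoc x h)
  then show ?case using Wt_snoc_bounds valid_snoc_iff by blast
qed

lemma finite_S: "finite (S h i)"
  using finite_E0 by (simp add: S_set_def)

lemma finite_B: "finite (B h i)"
  using finite_E0 by (simp add: B_set_def)

lemma S_subset: "S h i \<subseteq> rem (take i h)"
  by (auto simp: S_set_def remaining_def)

lemma B_subset: "B h i \<subseteq> rem (take i h)"
  by (auto simp: B_set_def remaining_def)

lemma S_B_disjoint: "x \<in> S h i \<Longrightarrow> x \<notin> B h i"
  by (auto simp: S_set_def B_set_def)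

lemma S_beyond_length: "length h \<le> i \<Longrightarrow> S h i = S h (length h)"
  by (simp add: S_set_def)

lemma S_snoc_prefix: "i \<le> length h \<Longrightarrow> S (h @ [x]) i = S h i"
  by (simp add: S_set_def)

lemma wB_snoc_prefix: "i \<le> length h \<Longrightarrow> wB (h @ [x]) i = wB h i"
  by (simp add: B_set_def B_weight_def)

lemma S_snoc_superset:
  assumes "valid h" and "x \<in> rem h"
  shows "S h (length h) - {x} \<subseteq> S (h @ [x]) (Suc (length h))"
proof
  fix e assume "e \<in> S h (length h) - {x}"
  then have e: "e \<in> rem (h @ [x])" "Wt h e \<le> 2"
    by (auto simp: S_set_def remaining_def)
  then have "Wt (h @ [x]) e \<le> 2" using Wt_snoc_bounds[OF assms e(1)] by linarith
  then show "e \<in> S (h @ [x]) (Suc (length h))" using e by (auto simp: S_set_def remaining_def)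
qed

lemma B_snoc_subset:
  assumes "valid h" and "x \<in> rem h"
  shows "B (h @ [x]) (Suc (length h)) \<subseteq> B h (length h) - {x}"
proof
  fix e assume "e \<in> B (h @ [x]) (Suc (length h))"
  then have e: "e \<in> rem (h @ [x])" "80 \<le> Wt (h @ [x]) e"
    by (auto simp: B_set_def remaining_def)
  then have "80 \<le> Wt h e" using Wt_snoc_bounds[OF assms e(1)] by linarith
  then show "e \<in> B h (length h) - {x}" using e by (auto simp: B_set_def remaining_def)
qed

lemma card_S_snoc_ge:
  assumes "valid h" and "x \<in> rem h"
  shows "card (S h (length h)) \<le> card (S (h @ [x]) (Suc (length h))) + of_bool (x \<in> S h (length h))"
  using card_mono[OF finite_S S_snoc_superset[OF assms]] finite_S[of h "length h"]
  by (auto simp: card_Diff_singleton_if)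

lemma card_S_Suc_ge:
  assumes "valid h"
  shows "card (S h j) \<le> card (S h (Suc j)) + 1"
proof (cases "j < length h")
  case True
  define q where "q = take j h"
  have q: "valid q" "h ! j \<in> rem q" "length q = j"
    using True assms nth_in_remaining_take valid_take by (auto simp: q_def)
  have "S h j = S q (length q)" "S h (Suc j) = S (q @ [h ! j]) (Suc (length q))"
    using True q(3) by (simp_all add: S_set_def q_def take_Suc_conv_app_nth)
  then show ?thesis using card_S_snoc_ge[OF q(1,2)] by (simp add: of_bool_def split: if_splits)
next
  case False
  then show ?thesis by (simp add: S_set_def)
qed

lemma wB_snoc_le:
  assumes v: "valid h" and x: "x \<in> rem h"
  shows "wB (h @ [x]) (Suc (length h)) \<le> wB h (length h) - (if x \<in> B h (length h) then 80 else 0)"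
proof -
  have "wB (h @ [x]) (Suc (length h)) \<le> sum (Wt h) (B (h @ [x]) (Suc (length h)))"
    unfolding B_weight_def
    by (rule sum_mono) (use Wt_snoc_bounds[OF v x] B_subset[of "h @ [x]" "Suc (length h)"] in auto)
  also have "\<dots> \<le> sum (Wt h) (B h (length h) - {x})"
    by (rule sum_mono2) (use B_snoc_subset[OF v x] finite_B B_subset[of h "length h"] Wt_nonneg[OF v] in auto)
  also have "\<dots> = wB h (length h) - (if x \<in> B h (length h) then Wt h x else 0)"
    by (simp add: sum_diff1 finite_B B_weight_def)
  also have "\<dots> \<le> wB h (length h) - (if x \<in> B h (length h) then 80 else 0)"
    by (auto simp: B_set_def)
  finally show ?thesis .
qed

text \<open>\<open>idx h m\<close> is the paper's \<open>i\<^sub>m\<close>; as a \<open>LEAST\<close> it is meaningful only if \<open>reached h m\<close>.\<close>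
definition reached :: "'a list \<Rightarrow> nat \<Rightarrow> bool" where
  "reached h m \<longleftrightarrow> (\<exists>j. card (S h j) = m)"

lemma reached_idx:
  assumes "reached h m"
  shows "idx h m \<le> length h \<and> card (S h (idx h m)) = m"
proof -
  obtain j where j: "card (S h j) = m" using assms by (auto simp: reached_def)
  have "card (S h (min j (length h))) = m"
    using j S_beyond_length[of h j] by (cases "j \<le> length h") auto
  then have "idx h m \<le> min j (length h)" unfolding first_idx_def by (rule Least_le)
  moreover have "card (S h (idx h m)) = m" unfolding first_idx_def using j by (rule LeastI)
  ultimately show ?thesis by simp
qed

lemma idx_snoc:
  assumes "reached h m"
  shows "idx (h @ [x]) m = idx h m"
  unfolding first_idx_def[of E0 Wt "h @ [x]"]
proof (rule Least_equality)
  show "card (S (h @ [x]) (idx h m)) = m" using reached_idx[OF assms] S_snoc_prefix by simp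
next
  fix y assume y: "card (S (h @ [x]) y) = m"
  show "idx h m \<le> y"
  proof (rule ccontr)
    assume "\<not> idx h m \<le> y"
    then have "card (S h y) = m" using y reached_idx[OF assms] S_snoc_prefix[of y h x] by simp
    then have "idx h m \<le> y" unfolding first_idx_def by (rule Least_le)
    then show False using \<open>\<not> idx h m \<le> y\<close> by simp
  qed
qed

lemma reached_snoc: "reached h m \<Longrightarrow> reached (h @ [x]) m"
  using reached_idx S_snoc_prefix unfolding reached_def by metis

lemma reached_snoc_first:
  assumes "\<not> reached h m" and "reached (h @ [x]) m"
  shows "idx (h @ [x]) m = Suc (length h) \<and> card (S (h @ [x]) (Suc (length h))) = m"
proof -
  have idx: "idx (h @ [x]) m \<le> Suc (length h)" "card (S (h @ [x]) (idx (h @ [x]) m)) = m"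
    using reached_idx[OF assms(2)] by auto
  have "\<not> idx (h @ [x]) m \<le> length h"
  proof
    assume "idx (h @ [x]) m \<le> length h"
    then have "card (S h (idx (h @ [x]) m)) = m" using idx(2) S_snoc_prefix by simp
    then show False using assms(1) by (auto simp: reached_def)
  qed
  then show ?thesis using idx by (simp add: le_Suc_eq)
qed

lemma less_card_S_if_not_reached:
  assumes "valid h" and "m \<le> card (S h 0)" and "\<not> reached h m"
  shows "m < card (S h j)"
proof (rule ccontr)
  assume "\<not> m < card (S h j)"
  then have "\<exists>i\<le>j. card (S h i) = m"
    by (intro discrete_ivt_decreasing[where f = "\<lambda>i. card (S h i)"])
       (use card_S_Suc_ge[OF assms(1)] assms(2) in auto)
  then show False using assms(3) by (auto simp: reached_def)
qed

lemma reached_mono: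
  assumes "valid h" and "m' \<le> m" and "m \<le> card (S h 0)" and "reached h m'"
  shows "reached h m"
proof (rule ccontr)
  assume "\<not> reached h m"
  then have "m < card (S h (idx h m'))" by (rule less_card_S_if_not_reached[OF assms(1,3)])
  then show False using reached_idx[OF assms(4)] assms(2) by simp
qed

lemma reached_if_remaining_empty:
  assumes "valid h" and "rem h = {}" and "m \<le> card (S h 0)"
  shows "reached h m"
proof (rule ccontr)
  assume "\<not> reached h m"
  then have "m < card (S h (length h))" by (rule less_card_S_if_not_reached[OF assms(1,3)])
  moreover have "S h (length h) = {}" using S_subset[of h "length h"] assms(2) by simp
  ultimately show False by simp
qed

lemma wB_le_sum_Wt:
  assumes "valid h"
  shows "wB h (length h) \<le> sum (Wt h) (rem h)"
proof -
  have "wB h (length h) = sum (Wt h) (B h (length h))" by (simp add: B_weight_def)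
  also have "\<dots> \<le> sum (Wt h) (rem h)"
    by (rule sum_mono2) (use B_subset[of h "length h"] Wt_nonneg[OF assms] finite_E0 in \<open>auto simp: remaining_def\<close>)
  finally show ?thesis .
qed

lemma sum_Dist_S_le:
  assumes v: "valid h" and W: "0 < sum (Wt h) (rem h)"
  shows "sum (Dist h) (S h (length h)) \<le> 3 * card (S h (length h)) / sum (Wt h) (rem h)"
proof -
  let ?W = "sum (Wt h) (rem h)"
  have "Dist h e \<le> 3 / ?W" if "e \<in> S h (length h)" for e
  proof -
    have e: "e \<in> rem h" "Wt h e \<le> 2" using that by (auto simp: S_set_def remaining_def)
    have "Dist h e \<le> (1 + eps) * (Wt h e / ?W)" using Dist_bounds[OF v e(1) W] by blast
    also have "\<dots> \<le> (3/2) * (2 / ?W)"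
      using eps_less e W Wt_nonneg[OF v e(1)] by (intro mult_mono divide_right_mono) auto
    finally show ?thesis by simp
  qed
  then have "sum (Dist h) (S h (length h)) \<le> (\<Sum>e\<in>S h (length h). 3 / ?W)" by (rule sum_mono)
  then show ?thesis by (simp add: mult.commute)
qed

lemma sum_Dist_B_ge:
  assumes v: "valid h" and W: "0 < sum (Wt h) (rem h)"
  shows "wB h (length h) / (2 * sum (Wt h) (rem h)) \<le> sum (Dist h) (B h (length h))"
proof -
  let ?W = "sum (Wt h) (rem h)"
  have "Wt h e / (2 * ?W) \<le> Dist h e" if "e \<in> B h (length h)" for e
  proof -
    have e: "e \<in> rem h" using that by (auto simp: B_set_def remaining_def)
    have "Wt h e / (2 * ?W) = (1/2) * (Wt h e / ?W)" by simp
    also have "\<dots> \<le> (1 - eps) * (Wt h e / ?W)"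
      using eps_less W Wt_nonneg[OF v e] by (intro mult_right_mono) auto
    also have "\<dots> \<le> Dist h e" using Dist_bounds[OF v e W] by blast
    finally show ?thesis .
  qed
  then have "(\<Sum>e\<in>B h (length h). Wt h e / (2 * ?W)) \<le> sum (Dist h) (B h (length h))"
    by (rule sum_mono)
  then show ?thesis by (simp add: B_weight_def sum_divide_distrib)
qed

lemma sum_Dist_S_le_sum_Dist_B:
  assumes v: "valid h" and less: "2 * real (card (S h (length h))) < wB h (length h)"
  shows "sum (Dist h) (S h (length h)) / 5 \<le> (1 - exp (-2)) * sum (Dist h) (B h (length h))"
proof -
  let ?W = "sum (Wt h) (rem h)" and ?s = "real (card (S h (length h)))" and ?b = "wB h (length h)"
  have W: "0 < ?W" using less wB_le_sum_Wt[OF v] by linarith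
  have "3 \<le> exp (2::real)" using exp_ge_add_one_self[of 2] by simp
  then have c: "3/5 \<le> 1 - exp (-2::real)" by (simp add: exp_minus field_simps)
  have "sum (Dist h) (S h (length h)) / 5 \<le> 3 * ?s / (5 * ?W)"
    using sum_Dist_S_le[OF v W] by (simp add: field_simps)
  also have "\<dots> \<le> (3/5) * (?b / (2 * ?W))" using less W by (simp add: field_simps)
  also have "\<dots> \<le> (1 - exp (-2)) * sum (Dist h) (B h (length h))"
    using c sum_Dist_B_ge[OF v W] less W by (intro mult_mono) auto
  finally show ?thesis .
qed

end

section \<open>The potential\<close>

lemma five_sixths_pow_mult_exp_le: "(5/6::real) ^ n * exp (real n / 10) \<le> exp (- real n / 40)"
proof -
  have e: "exp (1/8::real) \<le> 6/5"
  proof (rule ccontr)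
    assume "\<not> ?thesis"
    then have "(6/5::real) ^ 8 < exp (1/8) ^ 8" by (intro power_strict_mono) auto
    also have "exp (1/8::real) ^ 8 = exp 1" by (simp add: exp_of_nat_mult[symmetric])
    moreover have "(6/5::real) ^ 8 = 1679616/390625" by (simp add: power_divide)
    ultimately show False using exp_le by simp
  qed
  have "(5/6::real) ^ n * exp (real n / 10) * exp (real n / 40) = ((5/6) * exp (1/8)) ^ n"
    by (simp add: exp_add[symmetric] power_mult_distrib exp_of_nat_mult[symmetric] field_simps)
  also have "\<dots> \<le> 1" using e by (intro power_le_one) auto
  finally show ?thesis by (simp add: exp_minus field_simps)
qed

lemma sum_mult_affine_indicators:
  fixes D :: "'a \<Rightarrow> real"
  assumes "finite R" and "X \<subseteq> R" and "Y \<subseteq> R"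
  shows "(\<Sum>x\<in>R. D x * (1 + c * of_bool (x \<in> X) - d * of_bool (x \<in> Y)))
       = sum D R + c * sum D X - d * sum D Y"
proof -
  have "(\<Sum>x\<in>R. D x * (1 + c * of_bool (x \<in> X) - d * of_bool (x \<in> Y)))
      = sum D R + c * (\<Sum>x\<in>R. D x * of_bool (x \<in> X)) - d * (\<Sum>x\<in>R. D x * of_bool (x \<in> Y))"
    by (simp add: algebra_simps sum.distrib sum_subtractf sum_distrib_left del: sum_mult_of_bool_eq)
  also have "\<dots> = sum D R + c * sum D X - d * sum D Y"
    using assms by (simp add: Int_absorb1)
  finally show ?thesis .
qed

definition mid_potential :: "nat \<Rightarrow> nat \<Rightarrow> real \<Rightarrow> real" where
  "mid_potential l s b = (5/6) ^ (min s (2 * l) - l) * exp ((b - 4 * real l) / 40)"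

lemma mid_potential_nonneg: "0 \<le> mid_potential l s b"
  by (simp add: mid_potential_def)

lemma one_le_mid_potential: "4 * real l < b \<Longrightarrow> 1 \<le> mid_potential l l b"
  by (simp add: mid_potential_def)

lemma mid_potential_entry_le:
  assumes "b \<le> 8 * real l"
  shows "mid_potential l (2 * l) b \<le> exp (- real l / 40)"
proof -
  have "exp ((b - 4 * real l) / 40) \<le> exp (real l / 10)" using assms by simp
  then have "mid_potential l (2 * l) b \<le> (5/6) ^ l * exp (real l / 10)"
    by (simp add: mid_potential_def)
  also have "\<dots> \<le> exp (- real l / 40)" by (rule five_sixths_pow_mult_exp_le)
  finally show ?thesis .
qed

lemma mid_potential_step:
  assumes "l < s" and "s \<le> s' + of_bool cs" and "b' \<le> b - (if cb then 80 else 0)" and "\<not> (cs \<and> cb)"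
  shows "mid_potential l s' b' \<le> mid_potential l s b *
           (1 + (if s \<le> 2 * l then 1/5 else 0) * of_bool cs - (1 - exp (-2)) * of_bool cb)"
proof -
  have pow: "(5/6::real) ^ (min s' (2 * l) - l)
      \<le> (5/6) ^ (min s (2 * l) - l) * (if cs \<and> s \<le> 2 * l then 6/5 else 1)"
  proof (cases "cs \<and> s \<le> 2 * l")
    case True
    then have "min s (2 * l) - l = Suc (s - 1 - l)" "s - 1 - l \<le> min s' (2 * l) - l"
      using assms(1,2) by auto
    then show ?thesis using True by (simp add: power_decreasing)
  next
    case False
    then have "min s (2 * l) - l \<le> min s' (2 * l) - l" using assms(2) by (cases cs) auto
    then have "(5/6::real) ^ (min s' (2 * l) - l) \<le> (5/6) ^ (min s (2 * l) - l)"
      by (rule power_decreasing) auto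
    then show ?thesis by (subst if_not_P[OF False]) simp
  qed
  have ex: "exp ((b' - 4 * real l) / 40) \<le> exp ((b - 4 * real l) / 40) * (if cb then exp (-2) else 1)"
  proof (cases cb)
    case True
    then have "(b' - 4 * real l) / 40 \<le> (b - 4 * real l) / 40 + (-2)"
      using assms(3) by (simp add: field_simps)
    then have "exp ((b' - 4 * real l) / 40) \<le> exp ((b - 4 * real l) / 40 + (-2))"
      by (rule exp_mono)
    also have "\<dots> = exp ((b - 4 * real l) / 40) * exp (-2)" by (rule exp_add)
    finally show ?thesis using True by simp
  next
    case False
    then show ?thesis using assms(3) by simp
  qed
  have "mid_potential l s' b' \<le> mid_potential l s b *
      ((if cs \<and> s \<le> 2 * l then 6/5 else 1) * (if cb then exp (-2) else 1))"
    using mult_mono[OF pow ex] by (simp add: mid_potential_def ac_simps)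
  also have "\<dots> = mid_potential l s b *
      (1 + (if s \<le> 2 * l then 1/5 else 0) * of_bool cs - (1 - exp (-2)) * of_bool cb)"
    using assms(4) by auto
  finally show ?thesis .
qed

locale bad_event_bound = adversarial_sampling +
  fixes l :: nat
  assumes l_pos: "1 \<le> l" and l_le: "l \<le> card {e\<in>E0. w0 e \<le> 2} div 2"
begin

lemma two_l_le_card_S_0: "2 * l \<le> card (S h 0)"
  using l_le by (simp add: S_set_def Wt_Nil)

lemma reached_2l_if_reached_l: "valid h \<Longrightarrow> reached h l \<Longrightarrow> reached h (2 * l)"
  using reached_mono[of h l "2 * l"] two_l_le_card_S_0[of h] by simp

definition may_become_bad :: "'a list \<Rightarrow> bool" where
  "may_become_bad h \<longleftrightarrow> 4 * real l < wB h (length h) \<and> wB h (idx h (2 * l)) \<le> 8 * real l"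

definition potential :: "'a list \<Rightarrow> real" where
  "potential h =
     (if reached h l then of_bool (is_bad E0 Wt h l)
      else if reached h (2 * l)
      then of_bool (may_become_bad h) * mid_potential l (card (S h (length h))) (wB h (length h))
      else exp (- real l / 40))"

lemma is_bad_snoc:
  assumes v: "valid h" and r1: "reached h l"
  shows "is_bad E0 Wt (h @ [x]) l = is_bad E0 Wt h l"
proof -
  have r2: "reached h (2 * l)" using reached_2l_if_reached_l[OF v r1] .
  show ?thesis
    unfolding is_bad_def idx_snoc[OF r1] idx_snoc[OF r2]
    using wB_snoc_prefix reached_idx[OF r1] reached_idx[OF r2] by simp
qed

lemma potential_final:
  assumes "valid h" and "rem h = {}"
  shows "of_bool (is_bad E0 Wt h l) \<le> potential h"
proof -
  have "reached h l"
    using reached_if_remaining_empty[OF assms] two_l_le_card_S_0[of h] by simp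
  then show ?thesis by (simp add: potential_def)
qed

lemma potential_Nil_le: "potential [] \<le> exp (- real l / 40)"
proof -
  have "l < card (S [] i)" for i
    using S_beyond_length[of "[]" i] two_l_le_card_S_0[of "[]"] l_pos by simp
  then have "\<not> reached [] l" unfolding reached_def by (metis less_irrefl)
  moreover have "mid_potential l (card (S [] 0)) (wB [] 0) \<le> exp (- real l / 40)"
    if "reached [] (2 * l)" and "may_become_bad []"
  proof -
    have "idx [] (2 * l) = 0" "card (S [] 0) = 2 * l" using reached_idx[OF that(1)] by auto
    then show ?thesis using that(2) mid_potential_entry_le by (simp add: may_become_bad_def)
  qed
  ultimately show ?thesis by (auto simp: potential_def)
qed

lemma potential_snoc_early:
  assumes v: "valid h" and x: "x \<in> rem h" and nr2: "\<not> reached h (2 * l)"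
  shows "potential (h @ [x]) \<le> exp (- real l / 40)"
proof -
  let ?h' = "h @ [x]" and ?n' = "Suc (length h)"
  have nr1: "\<not> reached h l" using reached_2l_if_reached_l[OF v] nr2 by blast
  have "2 * l < card (S h (length h))"
    using less_card_S_if_not_reached[OF v two_l_le_card_S_0 nr2] .
  have "\<not> reached ?h' l"
  proof
    assume "reached ?h' l"
    then have "card (S ?h' ?n') = l" using reached_snoc_first[OF nr1] by blast
    then show False
      using card_S_snoc_ge[OF v x] \<open>2 * l < card (S h (length h))\<close> l_pos
      by (simp add: of_bool_def split: if_splits)
  qed
  moreover have "mid_potential l (card (S ?h' ?n')) (wB ?h' ?n') \<le> exp (- real l / 40)"
    if "reached ?h' (2 * l)" and "may_become_bad ?h'"
  proof -
    have "idx ?h' (2 * l) = ?n'" "card (S ?h' ?n') = 2 * l"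
      using reached_snoc_first[OF nr2 that(1)] by auto
    then show ?thesis using that(2) mid_potential_entry_le by (simp add: may_become_bad_def)
  qed
  ultimately show ?thesis by (auto simp: potential_def)
qed

lemma potential_snoc_middle:
  assumes v: "valid h" and x: "x \<in> rem h" and r2: "reached h (2 * l)" and nr1: "\<not> reached h l"
  shows "potential (h @ [x]) \<le> of_bool (may_become_bad h) *
           mid_potential l (card (S (h @ [x]) (Suc (length h)))) (wB (h @ [x]) (Suc (length h)))"
proof -
  let ?h' = "h @ [x]" and ?n' = "Suc (length h)"
  have wB_idx: "wB ?h' (idx ?h' (2 * l)) = wB h (idx h (2 * l))"
    using idx_snoc[OF r2] wB_snoc_prefix reached_idx[OF r2] by simp
  have wB_le: "wB ?h' ?n' \<le> wB h (length h)" using wB_snoc_le[OF v x] by (simp split: if_splits)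
  show ?thesis
  proof (cases "reached ?h' l")
    case True
    have first: "idx ?h' l = ?n'" "card (S ?h' ?n') = l" using reached_snoc_first[OF nr1 True] by auto
    show ?thesis
    proof (cases "is_bad E0 Wt ?h' l")
      case bad: True
      then have "may_become_bad h" "4 * real l < wB ?h' ?n'"
        using wB_idx wB_le first by (auto simp: is_bad_def may_become_bad_def)
      then show ?thesis using True bad first one_le_mid_potential by (simp add: potential_def)
    next
      case False
      then show ?thesis using True mid_potential_nonneg by (simp add: potential_def)
    qed
  next
    case False
    have "may_become_bad ?h' \<Longrightarrow> may_become_bad h"
      using wB_idx wB_le by (auto simp: may_become_bad_def)
    then show ?thesis using False reached_snoc[OF r2] mid_potential_nonneg by (auto simp: potential_def)
  qed
qed

lemma potential_snoc_middle_le: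
  assumes v: "valid h" and x: "x \<in> rem h" and r2: "reached h (2 * l)" and nr1: "\<not> reached h l"
    and "may_become_bad h"
  shows "potential (h @ [x]) \<le> mid_potential l (card (S h (length h))) (wB h (length h)) *
           (1 + (if card (S h (length h)) \<le> 2 * l then 1/5 else 0) * of_bool (x \<in> S h (length h))
              - (1 - exp (-2)) * of_bool (x \<in> B h (length h)))"
proof -
  let ?n = "length h"
  have "l < card (S h ?n)" using less_card_S_if_not_reached[OF v _ nr1] two_l_le_card_S_0[of h] by simp
  have "potential (h @ [x]) \<le> mid_potential l (card (S (h @ [x]) (Suc ?n))) (wB (h @ [x]) (Suc ?n))"
    using potential_snoc_middle[OF v x r2 nr1] \<open>may_become_bad h\<close> by simp
  also have "\<dots> \<le> mid_potential l (card (S h ?n)) (wB h ?n) *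
      (1 + (if card (S h ?n) \<le> 2 * l then 1/5 else 0) * of_bool (x \<in> S h ?n)
         - (1 - exp (-2)) * of_bool (x \<in> B h ?n))"
    by (rule mid_potential_step[OF \<open>l < card (S h ?n)\<close> card_S_snoc_ge[OF v x] wB_snoc_le[OF v x]])
       (use S_B_disjoint in blast)
  finally show ?thesis .
qed

lemma middle_drift:
  assumes v: "valid h" and "may_become_bad h"
  shows "(if card (S h (length h)) \<le> 2 * l then 1/5 else 0) * sum (Dist h) (S h (length h))
           \<le> (1 - exp (-2)) * sum (Dist h) (B h (length h))"
proof (cases "card (S h (length h)) \<le> 2 * l")
  case True
  then have "2 * real (card (S h (length h))) \<le> 4 * real l" by simp
  then have "2 * real (card (S h (length h))) < wB h (length h)"
    using \<open>may_become_bad h\<close> by (simp add: may_become_bad_def)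
  then show ?thesis using sum_Dist_S_le_sum_Dist_B[OF v] True by simp
next
  case False
  have "0 \<le> sum (Dist h) (B h (length h))"
    using Dist_nonneg[OF v] B_subset[of h "length h"] by (intro sum_nonneg) auto
  then have "0 \<le> (1 - exp (-2)) * sum (Dist h) (B h (length h))" by simp
  then show ?thesis using False by simp
qed

lemma potential_middle_supermartingale:
  assumes v: "valid h" and ne: "rem h \<noteq> {}" and r2: "reached h (2 * l)" and nr1: "\<not> reached h l"
  shows "(\<Sum>x\<in>rem h. Dist h x * potential (h @ [x])) \<le> potential h"
proof (cases "may_become_bad h")
  case False
  have "(\<Sum>x\<in>rem h. Dist h x * potential (h @ [x])) \<le> 0"
    using potential_snoc_middle[OF v _ r2 nr1] False by (intro sum_Dist_mult_le[OF v ne]) simp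
  also have "0 = potential h" using False r2 nr1 by (simp add: potential_def)
  finally show ?thesis .
next
  case True
  let ?n = "length h"
  define M where "M = mid_potential l (card (S h ?n)) (wB h ?n)"
  define c where "c = (if card (S h ?n) \<le> 2 * l then 1/5 else 0::real)"
  define f where "f x = 1 + c * of_bool (x \<in> S h ?n) - (1 - exp (-2)) * of_bool (x \<in> B h ?n)" for x
  have expectation_f: "(\<Sum>x\<in>rem h. Dist h x * f x)
      = 1 + c * sum (Dist h) (S h ?n) - (1 - exp (-2)) * sum (Dist h) (B h ?n)"
  proof -
    have "S h ?n \<subseteq> rem h" "B h ?n \<subseteq> rem h" using S_subset[of h ?n] B_subset[of h ?n] by simp_all
    moreover have "finite (rem h)" using finite_E0 by (simp add: remaining_def)
    ultimately show ?thesis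
      unfolding f_def by (simp only: sum_mult_affine_indicators sum_Dist_eq_1[OF v ne])
  qed
  have "(\<Sum>x\<in>rem h. Dist h x * potential (h @ [x])) \<le> (\<Sum>x\<in>rem h. Dist h x * (M * f x))"
    unfolding M_def f_def c_def
    by (intro sum_mono mult_left_mono potential_snoc_middle_le[OF v _ r2 nr1 True] Dist_nonneg[OF v])
  also have "\<dots> = M * (\<Sum>x\<in>rem h. Dist h x * f x)"
    by (simp add: sum_distrib_left ac_simps)
  also have "\<dots> \<le> M"
    by (rule mult_left_le)
       (use expectation_f middle_drift[OF v True] mid_potential_nonneg in \<open>auto simp: M_def c_def\<close>)
  also have "\<dots> = potential h" using True r2 nr1 by (simp add: potential_def M_def)
  finally show ?thesis .
qed

lemma potential_supermartingale:
  assumes v: "valid h" and ne: "rem h \<noteq> {}"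
  shows "(\<Sum>x\<in>rem h. Dist h x * potential (h @ [x])) \<le> potential h"
proof (cases "reached h l")
  case True
  then have "potential (h @ [x]) = potential h" for x
    using reached_snoc[OF True] is_bad_snoc[OF v True] by (simp add: potential_def)
  then show ?thesis by (intro sum_Dist_mult_le[OF v ne]) simp
next
  case nr1: False
  show ?thesis
  proof (cases "reached h (2 * l)")
    case True
    show ?thesis by (rule potential_middle_supermartingale[OF v ne True nr1])
  next
    case False
    then have "potential h = exp (- real l / 40)" using nr1 by (simp add: potential_def)
    then show ?thesis using potential_snoc_early[OF v _ False] by (intro sum_Dist_mult_le[OF v ne]) simp
  qed
qed

end

theorem lemma4:
  fixes E0 :: "'a set" and eps :: real and w0 :: "'a \<Rightarrow> real"
    and Dist Wt :: "'a list \<Rightarrow> 'a \<Rightarrow> real" and l :: nat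
  assumes "finite E0"
    and "0 < eps" and "eps < 1/2"
    and "\<forall>e\<in>E0. 0 \<le> w0 e"
    and "sum w0 E0 = real (card E0)"
    and "adversary E0 eps w0 Dist Wt"
    and "1 \<le> l" and "l \<le> card {e\<in>E0. w0 e \<le> 2} div 2"
  shows "prob_event E0 Dist (\<lambda>h. is_bad E0 Wt h l) \<le> exp (- real l / 40)"
proof -
  interpret bad_event_bound E0 eps w0 Dist Wt l
    using assms by unfold_locales auto
  have "prob_event E0 Dist (\<lambda>h. is_bad E0 Wt h l) \<le> potential []"
    by (rule prob_event_le_supermartingale[OF finite_E0 Dist_nonneg potential_supermartingale potential_final])
  also have "\<dots> \<le> exp (- real l / 40)" by (rule potential_Nil_le)
  finally show ?thesis .
qed

end
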